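(* Let $G$ be a connected graph with $n\ge 2$ vertices and diameter $D$. Then $$EE(G) > e^{\sqrt[D]{n-1}} + (n-1) - \sqrt[D]{n-1}.$$
   Context: All graphs are finite, simple and undirected. For a graph $G$ with adjacency matrix $A(G)$ having eigenvalues $\lambda_1\ge\cdots\ge\lambda_n$, the Estrada index is $EE(G)=\sum_{i=1}^n e^{\lambda_i}$. The diameter $D$ is the maximum over all pairs of vertices of the length of a shortest path between them. *)

theory Defs
  imports Complex_Main "Jordan_Normal_Form.Char_Poly"
begin

definition simple_graph :: "nat \<Rightarrow> (nat \<Rightarrow> nat \<Rightarrow> bool) \<Rightarrow> bool" where
  "simple_graph n E \<longleftrightarrow> (\<forall>u<n. \<forall>v<n. E u v \<longleftrightarrow> E v u) \<and> (\<forall>u<n. \<not> E u u)"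

definition adj_mat :: "nat \<Rightarrow> (nat \<Rightarrow> nat \<Rightarrow> bool) \<Rightarrow> real mat" where
  "adj_mat n E = mat n n (\<lambda>(i,j). if E i j then 1 else 0)"

text \<open>Estrada index: sum of exp over the eigenvalues (with multiplicity), i.e. over
  the roots of the characteristic polynomial of the adjacency matrix (all real,
  since the matrix is real symmetric).\<close>
definition estrada_index :: "nat \<Rightarrow> (nat \<Rightarrow> nat \<Rightarrow> bool) \<Rightarrow> real" where
  "estrada_index n E = (\<Sum>\<mu>\<in># proots (char_poly (adj_mat n E)). exp \<mu>)"

definition walk :: "nat \<Rightarrow> (nat \<Rightarrow> nat \<Rightarrow> bool) \<Rightarrow> nat \<Rightarrow> nat \<Rightarrow> nat \<Rightarrow> bool" where
  "walk n E u v k \<longleftrightarrow> (\<exists>p :: nat \<Rightarrow> nat. p 0 = u \<and> p k = v \<and> (\<forall>i\<le>k. p i < n)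
      \<and> (\<forall>i<k. E (p i) (p (Suc i))))"

definition connected_graph :: "nat \<Rightarrow> (nat \<Rightarrow> nat \<Rightarrow> bool) \<Rightarrow> bool" where
  "connected_graph n E \<longleftrightarrow> (\<forall>u<n. \<forall>v<n. \<exists>k. walk n E u v k)"

text \<open>Shortest-path distance (length of a shortest walk = shortest path).\<close>
definition graph_dist :: "nat \<Rightarrow> (nat \<Rightarrow> nat \<Rightarrow> bool) \<Rightarrow> nat \<Rightarrow> nat \<Rightarrow> nat" where
  "graph_dist n E u v = (LEAST k. walk n E u v k)"

definition diameter :: "nat \<Rightarrow> (nat \<Rightarrow> nat \<Rightarrow> bool) \<Rightarrow> nat" where
  "diameter n E = Max {graph_dist n E u v | u v. u < n \<and> v < n}"

end

theory Submission
  imports Defs "Jordan_Normal_Form.Schur_Decomposition"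
begin

text \<open>Since \<open>tr A = 0\<close>, the eigenvalues other than the largest one \<open>\<lambda>\<close> sum to \<open>-\<lambda>\<close>,
  and \<open>exp x \<ge> 1 + x\<close> (strictly unless \<open>x = 0\<close>) gives \<open>EE > exp \<lambda> + (n - 1) - \<lambda>\<close>. As
  \<open>exp x - x\<close> is increasing for \<open>x \<ge> 0\<close>, it remains to show \<open>\<lambda>^D \<ge> n - 1\<close>.
  From every vertex at least \<open>n - 1\<close> walks of length \<open>D\<close> start (one for each other vertex
  within distance \<open>D\<close>), hence at least \<open>(n - 1)^j\<close> walks of length \<open>jD\<close>, and Cauchy-Schwarz
  on the rows of \<open>A^(jD)\<close> gives \<open>tr A^(2jD) \<ge> (n - 1)^(2j)\<close>. The power sums \<open>tr A^k\<close> of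
  the eigenvalues are nonnegative, which forces \<open>\<lambda>\<close> to have the largest modulus; so
  \<open>n \<lambda>^(2jD) \<ge> (n - 1)^(2j)\<close> for all \<open>j\<close>, and letting \<open>j \<rightarrow> \<infinity>\<close> yields the claim.\<close>

section \<open>Traces and spectra of matrices\<close>

definition mat_trace :: "'a::comm_ring_1 mat \<Rightarrow> 'a" where
  "mat_trace M = (\<Sum>i<dim_row M. M $$ (i,i))"

lemma mat_trace_mult_comm:
  assumes "A \<in> carrier_mat n m" "B \<in> carrier_mat m n"
  shows "mat_trace (A * B) = mat_trace (B * A)"
proof -
  have "mat_trace (A * B) = (\<Sum>i<n. \<Sum>j<m. A $$ (i,j) * B $$ (j,i))"
    using assms by (auto simp: mat_trace_def scalar_prod_def atLeast0LessThan intro!: sum.cong)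
  also have "\<dots> = (\<Sum>j<m. \<Sum>i<n. B $$ (j,i) * A $$ (i,j))"
    by (subst sum.swap) (simp add: mult.commute)
  also have "\<dots> = mat_trace (B * A)"
    using assms by (auto simp: mat_trace_def scalar_prod_def atLeast0LessThan intro!: sum.cong)
  finally show ?thesis .
qed

lemma mat_trace_similar:
  assumes "similar_mat_wit A B P Q"
  shows "mat_trace A = mat_trace B"
proof -
  obtain n where c: "A \<in> carrier_mat n n" "B \<in> carrier_mat n n" "P \<in> carrier_mat n n"
      "Q \<in> carrier_mat n n" and QP: "Q * P = 1\<^sub>m n" and A: "A = P * B * Q"
    using assms unfolding similar_mat_wit_def Let_def by auto
  have "mat_trace A = mat_trace (P * (B * Q))" using A c by (simp add: assoc_mult_mat)
  also have "\<dots> = mat_trace ((B * Q) * P)" using c by (intro mat_trace_mult_comm) auto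
  also have "(B * Q) * P = B" using QP c by (simp add: assoc_mult_mat)
  finally show ?thesis .
qed

lemma pow_mat_add:
  assumes "A \<in> carrier_mat n n"
  shows "A ^\<^sub>m (a + b) = A ^\<^sub>m a * A ^\<^sub>m b"
proof (induction b)
  case (Suc b)
  then show ?case using assms by (simp add: assoc_mult_mat[of _ n n _ n _ n])
qed (use assms in simp)

lemma transpose_pow_mat:
  fixes A :: "'a::comm_semiring_1 mat"
  assumes A: "A \<in> carrier_mat n n"
  shows "transpose_mat (A ^\<^sub>m k) = transpose_mat A ^\<^sub>m k"
proof (induction k)
  case (Suc k)
  have "transpose_mat (A ^\<^sub>m Suc k) = transpose_mat (A ^\<^sub>m k * A)"
    by simp
  also have "\<dots> = transpose_mat A * transpose_mat (A ^\<^sub>m k)"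
    using A by (intro transpose_mult) auto
  also have "\<dots> = transpose_mat A ^\<^sub>m 1 * transpose_mat A ^\<^sub>m k"
    using A Suc by simp
  also have "\<dots> = transpose_mat A ^\<^sub>m Suc k"
    using pow_mat_add[of "transpose_mat A" n 1 k] A by simp
  finally show ?case .
qed (use A in simp)

lemma upper_triangular_pow:
  assumes B: "B \<in> carrier_mat n n" and ut: "upper_triangular B"
  shows "upper_triangular (B ^\<^sub>m k) \<and> (\<forall>i<n. (B ^\<^sub>m k) $$ (i,i) = (B $$ (i,i)) ^ k)"
proof (induction k)
  case 0
  then show ?case using B by (auto simp: upper_triangular_def)
next
  case (Suc k)
  let ?C = "B ^\<^sub>m k"
  have C: "?C \<in> carrier_mat n n" using B by simp
  have utC: "?C $$ (i,j) = 0" and utB: "B $$ (i,j) = 0" if "i < n" "j < i" for i j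
    using that Suc C ut B unfolding upper_triangular_def by auto
  have entry: "(B ^\<^sub>m Suc k) $$ (i,j) = (\<Sum>l<n. ?C $$ (i,l) * B $$ (l,j))"
    if "i < n" "j < n" for i j
    using that C B by (simp add: scalar_prod_def atLeast0LessThan)
  have "(B ^\<^sub>m Suc k) $$ (i,j) = 0" if "i < n" "j < i" for i j
  proof -
    have "(\<Sum>l<n. ?C $$ (i,l) * B $$ (l,j)) = 0"
    proof (rule sum.neutral, intro ballI)
      fix l assume "l \<in> {..<n}"
      then show "?C $$ (i,l) * B $$ (l,j) = 0"
        using utC utB that by (cases "l < i") auto
    qed
    then show ?thesis using entry that by simp
  qed
  moreover have "(B ^\<^sub>m Suc k) $$ (i,i) = (B $$ (i,i)) ^ Suc k" if "i < n" for i
  proof -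
    have "(\<Sum>l<n. ?C $$ (i,l) * B $$ (l,i))
        = (\<Sum>l<n. if l = i then ?C $$ (i,i) * B $$ (i,i) else 0)"
    proof (rule sum.cong[OF refl])
      fix l assume "l \<in> {..<n}"
      then show "?C $$ (i,l) * B $$ (l,i) = (if l = i then ?C $$ (i,i) * B $$ (i,i) else 0)"
        using utC utB that by (cases "l < i"; cases "l = i") auto
    qed
    then show ?thesis using entry that Suc by (simp add: power_commutes)
  qed
  ultimately show ?case using B unfolding upper_triangular_def by auto
qed

lemma mat_trace_pow_eq_power_sum:
  fixes A :: "'a::conjugatable_ordered_field mat"
  assumes A: "A \<in> carrier_mat n n" and cp: "char_poly A = (\<Prod>e\<leftarrow>es. [:-e, 1:])"
  shows "mat_trace (A ^\<^sub>m k) = (\<Sum>e\<leftarrow>es. e ^ k)"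
proof -
  obtain B P Q where "schur_decomposition A es = (B, P, Q)"
    by (cases "schur_decomposition A es") auto
  from schur_decomposition[OF A cp this] have sim: "similar_mat_wit A B P Q"
    and ut: "upper_triangular B" and diag: "diag_mat B = es" by auto
  have B: "B \<in> carrier_mat n n" using similar_mat_witD2[OF A sim] by auto
  have "mat_trace (A ^\<^sub>m k) = mat_trace (B ^\<^sub>m k)"
    by (rule mat_trace_similar[OF similar_mat_wit_pow[OF sim]])
  also have "\<dots> = (\<Sum>i<n. (B $$ (i,i)) ^ k)"
    using upper_triangular_pow[OF B ut, of k] B by (simp add: mat_trace_def)
  also have "\<dots> = (\<Sum>e\<leftarrow>es. e ^ k)"
    using diag B by (simp add: diag_mat_def sum_list_distinct_conv_sum_set o_def
        atLeast0LessThan[symmetric] flip: diag)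
  finally show ?thesis .
qed

lemma real_symmetric_eigenvalue_real:
  fixes A :: "real mat"
  assumes A: "A \<in> carrier_mat n n" and sym: "transpose_mat A = A"
    and ev: "eigenvalue (map_mat complex_of_real A) a"
  shows "cnj a = a"
proof -
  let ?Ac = "map_mat complex_of_real A"
  obtain v where v: "v \<in> carrier_vec n" "v \<noteq> 0\<^sub>v n" "?Ac *\<^sub>v v = a \<cdot>\<^sub>v v"
    using ev A unfolding eigenvalue_def eigenvector_def by auto
  have Aij: "A $$ (i,j) = A $$ (j,i)" if "i < n" "j < n" for i j
    using that A by (metis carrier_matD index_transpose_mat(1) sym)
  define s where "s = (\<Sum>i<n. cnj (v$i) * (?Ac *\<^sub>v v)$i)"
  define t where "t = (\<Sum>i<n. cnj (v$i) * v$i)"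
  have s2: "s = (\<Sum>i<n. \<Sum>j<n. cnj (v$i) * of_real (A$$(i,j)) * v$j)"
    unfolding s_def using A v(1)
    by (auto simp: scalar_prod_def atLeast0LessThan sum_distrib_left mult.assoc intro!: sum.cong)
  have "cnj s = (\<Sum>i<n. \<Sum>j<n. v$i * of_real (A$$(i,j)) * cnj (v$j))"
    unfolding s2 by (simp add: cnj_sum)
  also have "\<dots> = (\<Sum>j<n. \<Sum>i<n. v$i * of_real (A$$(i,j)) * cnj (v$j))"
    by (rule sum.swap)
  also have "\<dots> = s"
    unfolding s2 by (intro sum.cong refl) (simp add: Aij mult.commute mult.left_commute)
  finally have cs: "cnj s = s" .
  have sa: "s = a * t"
    unfolding s_def t_def using v by (simp add: sum_distrib_left mult.left_commute)
  have t: "t = of_real (\<Sum>i<n. (cmod (v$i))\<^sup>2)"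
    unfolding t_def of_real_sum complex_norm_square by (simp add: mult.commute)
  obtain i where i: "i < n" "v$i \<noteq> 0"
    using v(1,2) by (metis carrier_vecD eq_vecI index_zero_vec(1) index_zero_vec(2))
  have "(\<Sum>i<n. (cmod (v$i))\<^sup>2) > 0"
    by (rule sum_pos2[of _ i]) (use i in auto)
  then have "t \<noteq> 0" "cnj t = t"
    using t by (metis of_real_eq_0_iff order_less_irrefl, simp)
  with cs sa show ?thesis by (metis complex_cnj_mult mult_cancel_right)
qed

interpretation of_real_poly_hom: map_poly_inj_idom_hom complex_of_real ..

lemma real_symmetric_char_poly_splits:
  fixes A :: "real mat"
  assumes A: "A \<in> carrier_mat n n" and sym: "transpose_mat A = A"
  obtains rs where "length rs = n" "char_poly A = (\<Prod>r\<leftarrow>rs. [:-r, 1:])"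
proof -
  let ?Ac = "map_mat complex_of_real A"
  have Ac: "?Ac \<in> carrier_mat n n" using A by simp
  obtain as where cp: "char_poly ?Ac = (\<Prod>a\<leftarrow>as. [:-a, 1:])" and len: "length as = n"
    using char_poly_factorized[OF Ac] by auto
  have "cnj a = a" if "a \<in> set as" for a
  proof (rule real_symmetric_eigenvalue_real[OF A sym])
    have "poly (char_poly ?Ac) a = 0"
      unfolding cp using that by (auto simp: poly_prod_list prod_list_zero_iff)
    then show "eigenvalue ?Ac a" using eigenvalue_root_char_poly[OF Ac] by simp
  qed
  then have as: "as = map (complex_of_real \<circ> Re) as"
    by (induction as) (auto simp: complex_eq_iff)
  have "map_poly complex_of_real (char_poly A)
      = map_poly complex_of_real (\<Prod>r\<leftarrow>map Re as. [:-r, 1:])"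
    unfolding of_real_hom.char_poly_hom[OF A, symmetric] cp
    by (subst as) (simp add: of_real_poly_hom.hom_prod_list o_def)
  then have "char_poly A = (\<Prod>r\<leftarrow>map Re as. [:-r, 1:])" by simp
  with len show thesis by (intro that[of "map Re as"]) auto
qed

lemma proots_prod_linear_factors: "proots (\<Prod>r\<leftarrow>rs. [:-r, 1:]) = mset (rs :: 'a::idom list)"
proof (induction rs)
  case (Cons a rs)
  have "(\<Prod>r\<leftarrow>rs. [:-r, 1:]) \<noteq> (0 :: 'a poly)"
    by (subst prod_list_zero_iff) auto
  then show ?case using Cons by (simp add: proots_mult del: mult_pCons_left)
qed simp

section \<open>Real inequalities and power sums\<close>

lemma square_sum_le_card_mult_sum_squares:
  fixes f :: "'a \<Rightarrow> real"
  shows "(\<Sum>u\<in>S. f u)\<^sup>2 \<le> card S * (\<Sum>u\<in>S. (f u)\<^sup>2)"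
proof -
  have "0 \<le> (\<Sum>u\<in>S. \<Sum>w\<in>S. (f u - f w)\<^sup>2)" by (intro sum_nonneg) auto
  also have "\<dots> = 2 * (card S * (\<Sum>u\<in>S. (f u)\<^sup>2) - (\<Sum>u\<in>S. f u)\<^sup>2)"
    by (simp add: power2_diff sum.distrib sum_subtractf sum_distrib_left sum_distrib_right
        power2_eq_square sum_product algebra_simps)
  finally show ?thesis by simp
qed

lemma le_if_power_le_const_mult_power:
  fixes x y c :: real
  assumes le: "\<And>j. y ^ j \<le> c * x ^ j" and "0 \<le> x" "0 < y"
  shows "y \<le> x"
proof (rule ccontr)
  assume "\<not> y \<le> x"
  then have "(\<lambda>j. c * (x / y) ^ j) \<longlonglongrightarrow> c * 0"
    using assms by (intro tendsto_mult tendsto_const LIMSEQ_power_zero) auto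
  then have "eventually (\<lambda>j. c * (x / y) ^ j < 1) sequentially"
    by (intro order_tendstoD) auto
  then obtain j where "c * (x / y) ^ j < 1"
    by (auto simp: eventually_sequentially)
  moreover have "1 \<le> c * (x / y) ^ j"
    using le[of j] \<open>0 < y\<close> by (simp add: power_divide field_simps)
  ultimately show False by simp
qed

text \<open>If the smallest element \<open>-s\<close> had larger modulus than the maximum, all other elements
  would have modulus at most some \<open>t < s\<close>, and the odd power sums would eventually be
  negative.\<close>
lemma abs_le_Max_if_power_sums_nonneg:
  fixes rs :: "real list"
  assumes "r \<in> set rs" and nonneg: "\<And>k. 0 \<le> (\<Sum>x\<leftarrow>rs. x ^ k)"
  shows "\<bar>r\<bar> \<le> Max (set rs)"
proof -
  define M where "M = Max (set rs)"
  define \<mu> where "\<mu> = Min (set rs)"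
  have le_M: "x \<le> M" and ge_\<mu>: "\<mu> \<le> x" if "x \<in> set rs" for x
    using that unfolding M_def \<mu>_def by auto
  have \<mu>: "\<mu> \<in> set rs" unfolding \<mu>_def using assms(1) by (intro Min_in) auto
  have "- \<mu> \<le> M"
  proof (rule ccontr)
    assume "\<not> - \<mu> \<le> M"
    define s where "s = - \<mu>"
    define t where "t = Max (insert 0 (abs ` (set rs - {\<mu>})))"
    have s: "M < s" "0 < s" using \<open>\<not> - \<mu> \<le> M\<close> le_M[OF \<mu>] by (auto simp: s_def)
    have t: "0 \<le> t" "t < s"
      using s le_M ge_\<mu> by (fastforce simp: t_def abs_less_iff s_def Max_less_iff)+
    have odd_le: "x ^ (2 * j + 1) \<le> t ^ (2 * j + 1)" if "x \<in> set rs" for x j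
    proof (cases "x = \<mu>")
      case True
      then have "x ^ (2 * j + 1) = - (s ^ (2 * j + 1))" by (simp add: s_def power_minus_odd)
      moreover have "0 \<le> s ^ (2 * j + 1)" "0 \<le> t ^ (2 * j + 1)" using s t by simp_all
      ultimately show ?thesis by linarith
    next
      case False
      then have "\<bar>x\<bar> \<le> t" unfolding t_def using that by (intro Max_ge) auto
      have "x ^ (2 * j + 1) \<le> \<bar>x\<bar> ^ (2 * j + 1)" by (metis abs_ge_self power_abs)
      also have "\<dots> \<le> t ^ (2 * j + 1)" using \<open>\<bar>x\<bar> \<le> t\<close> by (intro power_mono) auto
      finally show ?thesis .
    qed
    have "(s\<^sup>2) ^ j \<le> (length rs * t / s) * (t\<^sup>2) ^ j" for j
    proof -
      let ?m = "2 * j + 1"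
      have "0 \<le> \<mu> ^ ?m + (\<Sum>x\<leftarrow>remove1 \<mu> rs. x ^ ?m)"
        using nonneg[of ?m] sum_list_map_remove1[OF \<mu>, of "\<lambda>x. x ^ ?m"] by simp
      also have "\<dots> \<le> - (s ^ ?m) + (\<Sum>x\<leftarrow>remove1 \<mu> rs. t ^ ?m)"
        using odd_le by (intro add_mono sum_list_mono) (auto simp: s_def power_minus_odd
            dest: notin_set_remove1)
      also have "\<dots> \<le> - (s ^ ?m) + length rs * t ^ ?m"
        using t \<mu> by (simp add: sum_list_triv length_remove1 mult_right_mono)
      finally have "s * (s\<^sup>2) ^ j \<le> s * ((length rs * t / s) * (t\<^sup>2) ^ j)"
        using s by (simp add: power_mult[symmetric] field_simps)
      from this s(2) show ?thesis by (rule mult_left_le_imp_le)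
    qed
    then have "s\<^sup>2 \<le> t\<^sup>2" by (rule le_if_power_le_const_mult_power) (use s in simp_all)
    then show False using s t by (simp add: power_mono_iff)
  qed
  then show ?thesis using le_M[OF assms(1)] ge_\<mu>[OF assms(1)] unfolding M_def by linarith
qed

lemma Max_nonneg_if_power_sums_nonneg:
  fixes rs :: "real list"
  assumes "rs \<noteq> []" and "\<And>k. 0 \<le> (\<Sum>x\<leftarrow>rs. x ^ k)"
  shows "0 \<le> Max (set rs)"
  using abs_le_Max_if_power_sums_nonneg[OF list.set_sel(1)[OF assms(1)] assms(2)] by simp

lemma power_sums_lower_bound_imp_le_Max_power:
  fixes rs :: "real list"
  assumes ne: "rs \<noteq> []" and nonneg: "\<And>k. 0 \<le> (\<Sum>x\<leftarrow>rs. x ^ k)" and "0 \<le> y"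
    and lower: "\<And>j. y ^ (2 * j) \<le> (\<Sum>x\<leftarrow>rs. x ^ (2 * j * d))"
  shows "y \<le> Max (set rs) ^ d"
proof -
  define lam where "lam = Max (set rs)"
  have abs_le: "\<bar>x\<bar> \<le> lam" if "x \<in> set rs" for x
    unfolding lam_def using abs_le_Max_if_power_sums_nonneg[OF that nonneg] .
  have "0 \<le> lam" unfolding lam_def using Max_nonneg_if_power_sums_nonneg[OF ne nonneg] .
  have "(y\<^sup>2) ^ j \<le> length rs * ((lam ^ d)\<^sup>2) ^ j" for j
  proof -
    have "(y\<^sup>2) ^ j \<le> (\<Sum>x\<leftarrow>rs. \<bar>x\<bar> ^ (2 * j * d))"
      using lower[of j] by (simp add: power_mult[symmetric] power_even_abs)
    also have "\<dots> \<le> (\<Sum>x\<leftarrow>rs. lam ^ (2 * j * d))"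
      using abs_le by (intro sum_list_mono power_mono) auto
    also have "\<dots> = length rs * ((lam ^ d)\<^sup>2) ^ j"
      by (simp add: sum_list_triv power_mult[symmetric] ac_simps)
    finally show ?thesis .
  qed
  then have "y = 0 \<or> y\<^sup>2 \<le> (lam ^ d)\<^sup>2"
    using \<open>0 \<le> y\<close> \<open>0 \<le> lam\<close>
      le_if_power_le_const_mult_power[where x = "(lam ^ d)\<^sup>2" and y = "y\<^sup>2"] by force
  then show ?thesis
    unfolding lam_def[symmetric] using \<open>0 \<le> lam\<close> by (auto intro: power2_le_imp_le)
qed

lemma add_one_less_exp:
  fixes x :: real
  assumes "x \<noteq> 0"
  shows "1 + x < exp x"
proof (cases "0 \<le> 1 + x / 2")
  case True
  have "1 + x < (1 + x / 2)\<^sup>2"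
    using assms by (simp add: power2_eq_square field_simps) (metis not_real_square_gt_zero)
  also have "\<dots> \<le> (exp (x / 2))\<^sup>2"
    using True by (intro power_mono) auto
  also have "\<dots> = exp x" by (simp flip: exp_double)
  finally show ?thesis .
qed (use exp_gt_zero[of x] in linarith)

lemma exp_minus_self_mono:
  fixes x y :: real
  assumes "0 \<le> x" "x \<le> y"
  shows "exp x - x \<le> exp y - y"
proof -
  have "exp x * (1 + (y - x)) \<le> exp x * exp (y - x)"
    by (intro mult_left_mono) auto
  moreover have "1 * (y - x) \<le> exp x * (y - x)"
    using assms by (intro mult_right_mono) auto
  ultimately show ?thesis by (simp add: algebra_simps flip: exp_add)
qed

lemma sum_list_one_plus_less_sum_exp:
  fixes xs :: "real list"
  assumes "x \<in> set xs" "x \<noteq> 0"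
  shows "(\<Sum>r\<leftarrow>xs. 1 + r) < (\<Sum>r\<leftarrow>xs. exp r)"
proof -
  have "(\<Sum>r\<leftarrow>remove1 x xs. 1 + r) \<le> (\<Sum>r\<leftarrow>remove1 x xs. exp r)"
    by (intro sum_list_mono) simp
  with add_one_less_exp[OF assms(2)] show ?thesis
    by (simp add: sum_list_map_remove1[OF assms(1)])
qed

lemma sum_exp_gt_if_sum_zero:
  fixes rs :: "real list"
  assumes len: "length rs = n" and "2 \<le> n" and sum0: "sum_list rs = 0"
    and "0 < R" "R \<le> Max (set rs)"
  shows "exp R + (real n - 1) - R < (\<Sum>r\<leftarrow>rs. exp r)"
proof -
  define lam where "lam = Max (set rs)"
  define rest where "rest = remove1 lam rs"
  have lam_in: "lam \<in> set rs" unfolding lam_def using len \<open>2 \<le> n\<close> by (intro Max_in) auto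
  have split: "(\<Sum>r\<leftarrow>rs. f r) = f lam + (\<Sum>r\<leftarrow>rest. f r)" for f :: "real \<Rightarrow> real"
    unfolding rest_def by (rule sum_list_map_remove1[OF lam_in])
  have "sum_list rest = - lam" using split[of "\<lambda>x. x"] sum0 by simp
  moreover have "0 < lam" using assms unfolding lam_def by simp
  ultimately have "\<not> (\<forall>x\<in>set rest. x = 0)"
    by (induction rest) auto
  then obtain x where "x \<in> set rest" "x \<noteq> 0" by blast
  then have "(\<Sum>r\<leftarrow>rest. 1 + r) < (\<Sum>r\<leftarrow>rest. exp r)"
    by (rule sum_list_one_plus_less_sum_exp)
  moreover have "(\<Sum>r\<leftarrow>rest. 1 + r) = (real n - 1) - lam"
    using \<open>sum_list rest = - lam\<close> lam_in len \<open>2 \<le> n\<close>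
    by (simp add: sum_list_addf sum_list_triv rest_def length_remove1 of_nat_diff)
  moreover have "exp R - R \<le> exp lam - lam"
    using assms unfolding lam_def by (intro exp_minus_self_mono) auto
  ultimately show ?thesis using split[of exp] by linarith
qed

section \<open>Walks in simple graphs\<close>

lemma adj_mat_carrier: "adj_mat n E \<in> carrier_mat n n"
  by (simp add: adj_mat_def)

lemma adj_mat_index: "i < n \<Longrightarrow> j < n \<Longrightarrow> adj_mat n E $$ (i,j) = (if E i j then 1 else 0)"
  by (simp add: adj_mat_def)

lemma transpose_adj_mat: "simple_graph n E \<Longrightarrow> transpose_mat (adj_mat n E) = adj_mat n E"
  by (rule eq_matI) (auto simp: adj_mat_def simple_graph_def)

lemma adj_mat_pow_nonneg: "i < n \<Longrightarrow> j < n \<Longrightarrow> 0 \<le> (adj_mat n E ^\<^sub>m k) $$ (i,j)"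
proof (induction k arbitrary: j)
  case (Suc k)
  then show ?case using adj_mat_carrier[of n E]
    by (auto simp: scalar_prod_def adj_mat_index intro!: sum_nonneg)
qed (simp add: adj_mat_def)

lemma adj_mat_pow_sym:
  assumes "simple_graph n E" "i < n" "j < n"
  shows "(adj_mat n E ^\<^sub>m k) $$ (i,j) = (adj_mat n E ^\<^sub>m k) $$ (j,i)"
  using transpose_pow_mat[OF adj_mat_carrier, of n E k] assms
  by (metis index_transpose_mat(1) pow_mat_dim_square adj_mat_carrier carrier_matD
      transpose_adj_mat)

definition walk_count :: "nat \<Rightarrow> (nat \<Rightarrow> nat \<Rightarrow> bool) \<Rightarrow> nat \<Rightarrow> nat \<Rightarrow> real" where
  "walk_count n E k v = (\<Sum>u<n. (adj_mat n E ^\<^sub>m k) $$ (v,u))"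

lemma walk_count_add:
  assumes "v < n"
  shows "walk_count n E (a + b) v = (\<Sum>u<n. (adj_mat n E ^\<^sub>m a) $$ (v,u) * walk_count n E b u)"
proof -
  let ?A = "adj_mat n E"
  have "walk_count n E (a + b) v = (\<Sum>w<n. \<Sum>u<n. (?A ^\<^sub>m a) $$ (v,u) * (?A ^\<^sub>m b) $$ (u,w))"
    unfolding walk_count_def pow_mat_add[OF adj_mat_carrier] using assms adj_mat_carrier[of n E]
    by (intro sum.cong refl) (simp add: scalar_prod_def atLeast0LessThan)
  then show ?thesis
    by (subst (asm) sum.swap) (simp add: walk_count_def sum_distrib_left)
qed

lemma walk_count_0: "v < n \<Longrightarrow> walk_count n E 0 v = 1"
  using adj_mat_carrier[of n E] by (simp add: walk_count_def one_mat_def)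

lemma walk_count_Suc:
  assumes "v < n"
  shows "walk_count n E (Suc k) v = (\<Sum>u\<in>{u. u < n \<and> E v u}. walk_count n E k u)"
proof -
  have "walk_count n E (Suc k) v = (\<Sum>u<n. if E v u then walk_count n E k u else 0)"
    using walk_count_add[OF assms, of E 1 k] assms adj_mat_carrier[of n E]
    by (auto simp: adj_mat_index intro!: sum.cong)
  also have "\<dots> = (\<Sum>u\<in>{u. u < n \<and> E v u}. walk_count n E k u)"
    by (simp add: sum.inter_filter[symmetric] lessThan_def conj_commute)
  finally show ?thesis .
qed

lemma walk_count_mult_ge:
  assumes c: "\<And>u. u < n \<Longrightarrow> c \<le> walk_count n E m u" and "0 \<le> c" and "v < n"
  shows "c ^ j \<le> walk_count n E (j * m) v"
  using \<open>v < n\<close>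
proof (induction j arbitrary: v)
  case (Suc j)
  let ?B = "adj_mat n E ^\<^sub>m m"
  have "c ^ Suc j \<le> walk_count n E m v * c ^ j"
    using c[OF Suc.prems] \<open>0 \<le> c\<close> by (metis mult.commute mult_right_mono power_Suc zero_le_power)
  also have "\<dots> = (\<Sum>u<n. ?B $$ (v,u) * c ^ j)"
    by (simp add: walk_count_def sum_distrib_right)
  also have "\<dots> \<le> (\<Sum>u<n. ?B $$ (v,u) * walk_count n E (j * m) u)"
    using Suc adj_mat_pow_nonneg[OF Suc.prems] by (intro sum_mono mult_left_mono) auto
  also have "\<dots> = walk_count n E (Suc j * m) v"
    using walk_count_add[OF Suc.prems, of E m "j * m"] by simp
  finally show ?case .
qed (simp add: walk_count_0)

definition walk_ball :: "nat \<Rightarrow> (nat \<Rightarrow> nat \<Rightarrow> bool) \<Rightarrow> nat \<Rightarrow> nat \<Rightarrow> nat set" where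
  "walk_ball n E v k = {u. u < n \<and> (\<exists>j\<le>k. walk n E v u j)}"

lemma walk_0_iff: "walk n E v u 0 \<longleftrightarrow> v = u \<and> v < n"
  unfolding walk_def by auto

lemma walk_edge: "u < n \<Longrightarrow> v < n \<Longrightarrow> E u v \<Longrightarrow> walk n E u v 1"
  unfolding walk_def by (intro exI[of _ "\<lambda>i. if i = 0 then u else v"]) auto

lemma walk_SucE:
  assumes "walk n E v u (Suc j)"
  obtains w where "w < n" "E v w" "walk n E w u j"
proof -
  obtain p where p: "p 0 = v" "p (Suc j) = u" "\<forall>i\<le>Suc j. p i < n"
      "\<forall>i<Suc j. E (p i) (p (Suc i))"
    using assms unfolding walk_def by blast
  have "walk n E (p 1) u j"
    unfolding walk_def using p by (intro exI[of _ "\<lambda>i. p (Suc i)"]) auto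
  with p show thesis by (intro that[of "p 1"]) auto
qed

lemma walk_ball_0: "v < n \<Longrightarrow> walk_ball n E v 0 = {v}"
  by (auto simp: walk_ball_def walk_0_iff)

lemma walk_ball_Suc_subset:
  "walk_ball n E v (Suc k) \<subseteq> insert v (\<Union>u\<in>{u. u < n \<and> E v u}. walk_ball n E u k)"
proof
  fix x assume "x \<in> walk_ball n E v (Suc k)"
  then obtain j where j: "j \<le> Suc k" "walk n E v x j" "x < n" unfolding walk_ball_def by auto
  show "x \<in> insert v (\<Union>u\<in>{u. u < n \<and> E v u}. walk_ball n E u k)"
  proof (cases j)
    case 0
    then show ?thesis using j by (simp add: walk_0_iff)
  next
    case (Suc j')
    then obtain w where "w < n" "E v w" "walk n E w x j'" using j walk_SucE by metis
    then show ?thesis using j Suc unfolding walk_ball_def by auto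
  qed
qed

text \<open>The ball of radius \<open>k + 1\<close> around \<open>v\<close> lies in \<open>v\<close> plus the balls of radius \<open>k\<close>
  around the neighbours, and each of these contains \<open>v\<close> once \<open>k \<ge> 1\<close>.\<close>
lemma card_walk_ball_le_walk_count:
  assumes sg: "simple_graph n E" and "v < n"
  shows "real (card (walk_ball n E v k)) \<le> walk_count n E k v + 1"
  using \<open>v < n\<close>
proof (induction k arbitrary: v)
  case 0
  then show ?case by (simp add: walk_ball_0 walk_count_0)
next
  case (Suc k)
  let ?N = "{u. u < n \<and> E v u}"
  define U where "U = (\<Union>u\<in>?N. walk_ball n E u k - {v})"
  have fin: "finite (walk_ball n E u k)" for u by (simp add: walk_ball_def)
  have nbr: "real (card (walk_ball n E u k - {v})) \<le> walk_count n E k u" if "u \<in> ?N" for u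
  proof (cases k)
    case 0
    then have "walk_ball n E u k - {v} = {u}"
      using that sg Suc.prems by (auto simp: walk_ball_0 simple_graph_def)
    then show ?thesis using 0 that by (simp add: walk_count_0)
  next
    case (Suc k')
    have "v \<in> walk_ball n E u k"
      using that sg Suc.prems walk_edge[of u n v E] Suc
      unfolding walk_ball_def simple_graph_def by auto
    then show ?thesis using Suc.IH[of u] that fin[of u] card_gt_0_iff[of "walk_ball n E u k"]
      by (auto simp: card_Diff_singleton of_nat_diff)
  qed
  have "walk_ball n E v (Suc k) \<subseteq> insert v U"
    using walk_ball_Suc_subset[of n E v k] unfolding U_def by blast
  moreover have "finite U" using fin unfolding U_def by auto
  ultimately have "card (walk_ball n E v (Suc k)) \<le> card (insert v U)"
    by (intro card_mono) auto
  also have "\<dots> \<le> Suc (card U)"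
    using \<open>finite U\<close> by (simp add: card_insert_if)
  also have "card U \<le> (\<Sum>u\<in>?N. card (walk_ball n E u k - {v}))"
    unfolding U_def by (rule card_UN_le) simp
  finally have "real (card (walk_ball n E v (Suc k)))
      \<le> 1 + (\<Sum>u\<in>?N. real (card (walk_ball n E u k - {v})))"
    by (simp flip: of_nat_sum)
  also have "\<dots> \<le> 1 + walk_count n E (Suc k) v"
    unfolding walk_count_Suc[OF Suc.prems] using nbr by (auto intro!: sum_mono)
  finally show ?case by simp
qed

lemma walk_graph_dist:
  assumes "connected_graph n E" "u < n" "v < n"
  shows "walk n E u v (graph_dist n E u v)"
  using assms unfolding graph_dist_def connected_graph_def by (blast intro: LeastI_ex)

lemma graph_dist_le_diameter: "u < n \<Longrightarrow> v < n \<Longrightarrow> graph_dist n E u v \<le> diameter n E"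
  unfolding diameter_def
  by (rule Max_ge) (auto simp: finite_image_set2)

lemma diameter_pos:
  assumes "connected_graph n E" "2 \<le> n"
  shows "0 < diameter n E"
proof -
  have "walk n E 0 1 (graph_dist n E 0 1)" using walk_graph_dist assms by simp
  then have "graph_dist n E 0 1 \<noteq> 0" using walk_0_iff[of n E 0 1] by (metis zero_neq_one)
  then show ?thesis using graph_dist_le_diameter[of 0 n 1 E] assms(2) by simp
qed

lemma walk_count_diameter_ge:
  assumes sg: "simple_graph n E" and conn: "connected_graph n E" and "v < n"
  shows "real n - 1 \<le> walk_count n E (diameter n E) v"
proof -
  have "walk_ball n E v (diameter n E) = {..<n}"
    using walk_graph_dist[OF conn \<open>v < n\<close>] graph_dist_le_diameter[OF \<open>v < n\<close>]
    unfolding walk_ball_def by blast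
  then show ?thesis using card_walk_ball_le_walk_count[OF sg \<open>v < n\<close>, of "diameter n E"] by simp
qed

lemma mat_trace_adj_mat_pow_double:
  assumes sg: "simple_graph n E" and "0 < n"
  shows "(\<Sum>v<n. (walk_count n E m v)\<^sup>2) / n \<le> mat_trace (adj_mat n E ^\<^sub>m (m + m))"
proof -
  let ?B = "adj_mat n E ^\<^sub>m m"
  have "(\<Sum>v<n. (walk_count n E m v)\<^sup>2) / n = (\<Sum>v<n. (walk_count n E m v)\<^sup>2 / n)"
    by (simp add: sum_divide_distrib)
  also have "\<dots> \<le> (\<Sum>v<n. \<Sum>u<n. (?B $$ (v,u))\<^sup>2)"
  proof (rule sum_mono)
    fix v
    show "(walk_count n E m v)\<^sup>2 / n \<le> (\<Sum>u<n. (?B $$ (v,u))\<^sup>2)"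
      using square_sum_le_card_mult_sum_squares[where S = "{..<n}" and f = "\<lambda>u. ?B $$ (v,u)"]
        \<open>0 < n\<close> by (simp add: walk_count_def divide_le_eq mult.commute)
  qed
  also have "\<dots> = mat_trace (adj_mat n E ^\<^sub>m (m + m))"
    unfolding mat_trace_def pow_mat_add[OF adj_mat_carrier] using adj_mat_carrier[of n E]
    by (auto simp: scalar_prod_def atLeast0LessThan power2_eq_square adj_mat_pow_sym[OF sg]
        intro!: sum.cong)
  finally show ?thesis .
qed

lemma mat_trace_adj_mat_pow_ge:
  assumes sg: "simple_graph n E" and conn: "connected_graph n E" and "2 \<le> n"
  shows "(real n - 1) ^ (2 * j) \<le> mat_trace (adj_mat n E ^\<^sub>m (2 * j * diameter n E))"
proof -
  let ?m = "j * diameter n E"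
  have "(real n - 1) ^ j \<le> walk_count n E ?m v" if "v < n" for v
    using walk_count_mult_ge[OF walk_count_diameter_ge[OF sg conn] _ that] \<open>2 \<le> n\<close> by simp
  then have "(\<Sum>v<n. ((real n - 1) ^ j)\<^sup>2) \<le> (\<Sum>v<n. (walk_count n E ?m v)\<^sup>2)"
    using \<open>2 \<le> n\<close> by (intro sum_mono power_mono) auto
  then have "(real n - 1) ^ (2 * j) \<le> (\<Sum>v<n. (walk_count n E ?m v)\<^sup>2) / n"
    using \<open>2 \<le> n\<close> by (simp add: le_divide_eq power_mult[symmetric] mult.commute)
  also have "\<dots> \<le> mat_trace (adj_mat n E ^\<^sub>m (?m + ?m))"
    using mat_trace_adj_mat_pow_double[OF sg] \<open>2 \<le> n\<close> by simp
  finally show ?thesis by (simp add: mult_2 add_mult_distrib)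
qed

section \<open>The Estrada index\<close>

lemma adjacency_spectrum:
  assumes "simple_graph n E"
  obtains rs where "length rs = n" "estrada_index n E = (\<Sum>r\<leftarrow>rs. exp r)"
    "\<And>k. mat_trace (adj_mat n E ^\<^sub>m k) = (\<Sum>r\<leftarrow>rs. r ^ k)"
proof -
  obtain rs where "length rs = n" and cp: "char_poly (adj_mat n E) = (\<Prod>r\<leftarrow>rs. [:-r, 1:])"
    using real_symmetric_char_poly_splits[OF adj_mat_carrier transpose_adj_mat[OF assms]] .
  moreover have "estrada_index n E = (\<Sum>r\<leftarrow>rs. exp r)"
    unfolding estrada_index_def cp proots_prod_linear_factors by (metis mset_map sum_mset_sum_list)
  ultimately show thesis
    using mat_trace_pow_eq_power_sum[OF adj_mat_carrier cp] that by blast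
qed

lemma mat_trace_adj_mat_pow_nonneg: "0 \<le> mat_trace (adj_mat n E ^\<^sub>m k)"
  using adj_mat_carrier[of n E]
  by (auto simp: mat_trace_def intro!: sum_nonneg adj_mat_pow_nonneg)

lemma mat_trace_adj_mat: "simple_graph n E \<Longrightarrow> mat_trace (adj_mat n E) = 0"
  by (simp add: mat_trace_def adj_mat_def simple_graph_def)

theorem mainTheorem4:
  fixes n :: nat and E :: "nat \<Rightarrow> nat \<Rightarrow> bool" and D :: nat
  assumes "simple_graph n E"
    and "connected_graph n E"
    and "n \<ge> 2"
    and "D = diameter n E"
  shows "estrada_index n E > exp (root D (real n - 1)) + (real n - 1) - root D (real n - 1)"
proof -
  obtain rs where len: "length rs = n" and EE: "estrada_index n E = (\<Sum>r\<leftarrow>rs. exp r)"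
    and tr: "\<And>k. mat_trace (adj_mat n E ^\<^sub>m k) = (\<Sum>r\<leftarrow>rs. r ^ k)"
    using adjacency_spectrum[OF assms(1)] by blast
  have "0 < D" using diameter_pos assms by simp
  have "rs \<noteq> []" using len assms(3) by auto
  have nonneg: "0 \<le> (\<Sum>r\<leftarrow>rs. r ^ k)" for k
    using mat_trace_adj_mat_pow_nonneg by (simp flip: tr)
  have sum0: "sum_list rs = 0"
    using tr[of 1] mat_trace_adj_mat[OF assms(1)] adj_mat_carrier[of n E] by simp
  have "real n - 1 \<le> Max (set rs) ^ D"
    using \<open>rs \<noteq> []\<close> nonneg assms mat_trace_adj_mat_pow_ge[OF assms(1,2)]
    by (intro power_sums_lower_bound_imp_le_Max_power) (auto simp flip: tr)
  moreover have "0 \<le> Max (set rs)"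
    using Max_nonneg_if_power_sums_nonneg[OF \<open>rs \<noteq> []\<close> nonneg] .
  ultimately have "root D (real n - 1) \<le> Max (set rs)"
    using \<open>0 < D\<close> by (metis real_root_le_mono real_root_power_cancel)
  moreover have "0 < root D (real n - 1)" using \<open>0 < D\<close> assms(3) by simp
  ultimately show ?thesis
    unfolding EE using sum_exp_gt_if_sum_zero[OF len assms(3) sum0] by blast
qed

end
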